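(* Let $T:X\rightrightarrows X^*$ be a monotone operator on a real Banach space $X$, let $i\in\{0,1\}$, let $C\in\mathcal C_i(T)$ and $K\in\mathcal C_0(T+\partial I_C)$; if $i=0$ assume also that $\overline{D_T}$ is convex. Then $C\cap K\in\mathcal C_i(T)$.
   Context: $I_C$ is the indicator function of $C$ and $\partial I_C$ its normal cone operator; $(T+\partial I_C)(x)=T(x)+\partial I_C(x)$, so $D_{T+\partial I_C}=D_T\cap C$. For an operator $S$, $\mathcal C_0(S)=\{C\subset X: C$ closed, convex, $D_S\cap\mathrm{int}\,C\ne\emptyset\}$ and $\mathcal C_1(S)=\{C\subset X: C$ closed, convex, and $\bigcup_{\lambda>0}\lambda(\mathrm{co}\,D_S-C)$ is a closed subspace of $X\}$. *)

theory Defs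
  imports "HOL-Analysis.Analysis"
begin

definition dom_op :: "('a \<Rightarrow> 'b set) \<Rightarrow> 'a set" where
  "dom_op T = {x. T x \<noteq> {}}"

definition monotone_op :: "('a::real_normed_vector \<Rightarrow> ('a \<Rightarrow>\<^sub>L real) set) \<Rightarrow> bool" where
  "monotone_op T \<longleftrightarrow>
     (\<forall>x y u v. u \<in> T x \<longrightarrow> v \<in> T y \<longrightarrow> blinfun_apply (u - v) (x - y) \<ge> 0)"

text \<open>Normal cone operator of C (subdifferential of the indicator function).\<close>
definition normal_cone :: "'a::real_normed_vector set \<Rightarrow> 'a \<Rightarrow> ('a \<Rightarrow>\<^sub>L real) set" where
  "normal_cone C x = (if x \<in> C then {u. \<forall>y\<in>C. blinfun_apply u (y - x) \<le> 0} else {})"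

definition op_sum :: "('a \<Rightarrow> 'b::plus set) \<Rightarrow> ('a \<Rightarrow> 'b set) \<Rightarrow> 'a \<Rightarrow> 'b set" where
  "op_sum S T x = {u + v | u v. u \<in> S x \<and> v \<in> T x}"

definition C0 :: "('a::real_normed_vector \<Rightarrow> 'b set) \<Rightarrow> 'a set set" where
  "C0 S = {C. closed C \<and> convex C \<and> dom_op S \<inter> interior C \<noteq> {}}"

definition C1 :: "('a::real_normed_vector \<Rightarrow> 'b set) \<Rightarrow> 'a set set" where
  "C1 S = {C. closed C \<and> convex C \<and>
      (let M = (\<Union>r\<in>{0::real<..}. (\<lambda>z. r *\<^sub>R z) ` {a - c | a c. a \<in> convex hull (dom_op S) \<and> c \<in> C})
       in closed M \<and> subspace M)}"

definition Cclass :: "nat \<Rightarrow> ('a::real_normed_vector \<Rightarrow> 'b set) \<Rightarrow> 'a set set" where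
  "Cclass i S = (if i = 0 then C0 S else C1 S)"

end

theory Submission
  imports Defs
begin

(* Both classes only see T through its domain D, and the domain of
   T + \<partial>I_C is D \<inter> C; so K \<in> C0(T + \<partial>I_C) yields a point x1 \<in> D \<inter> C lying in
   the interior of K.  Everything follows by moving slightly from x1 towards
   other points along segments: a short step stays inside the ball around x1
   contained in K, and convexity keeps the endpoint in the relevant sets.
   - Case i = 0: stepping from x1 towards a point x0 \<in> D \<inter> int C gives a point of
     int C \<inter> int K \<inter> cl D (convexity of cl D); as int C \<inter> int K is open, it
     then also meets D.
   - Case i = 1: the cone generated by co D - (C \<inter> K) equals the one generated
     by co D - C, since a difference a - c can be replaced by the rescaled
     difference of the points a, c moved towards x1. *)

definition generated_cone :: "'a::real_vector set \<Rightarrow> 'a set \<Rightarrow> 'a set" where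
  "generated_cone A C = (\<Union>r\<in>{0::real<..}. (\<lambda>z. r *\<^sub>R z) ` {a - c | a c. a \<in> A \<and> c \<in> C})"

lemma C1_iff:
  "C \<in> C1 S \<longleftrightarrow> closed C \<and> convex C \<and>
     closed (generated_cone (convex hull dom_op S) C) \<and>
     subspace (generated_cone (convex hull dom_op S) C)"
  by (simp add: C1_def generated_cone_def Let_def)

text \<open>The domain of \<open>T + \<partial>I_C\<close> is \<open>D_T \<inter> C\<close>, because the normal cone is nonempty
  (it contains 0) exactly on C.\<close>

lemma dom_op_sum_normal_cone: "dom_op (op_sum T (normal_cone C)) = dom_op T \<inter> C"
proof -
  have "normal_cone C x \<noteq> {} \<longleftrightarrow> x \<in> C" for x
  proof
    assume "x \<in> C"
    then have "0 \<in> normal_cone C x" by (simp add: normal_cone_def)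
    then show "normal_cone C x \<noteq> {}" by blast
  qed (auto simp: normal_cone_def split: if_splits)
  then show ?thesis by (auto simp: dom_op_def op_sum_def)
qed

text \<open>In a convex set, the half-open segment from any point towards an interior
  point lies in the interior (for arbitrary normed spaces; the library version
  is stated for Euclidean spaces only).\<close>

lemma convex_step_into_interior:
  fixes S :: "'a::real_normed_vector set"
  assumes S: "convex S" and c: "c \<in> interior S" and x: "x \<in> S" and s: "0 < s" "s \<le> 1"
  shows "(1 - s) *\<^sub>R x + s *\<^sub>R c \<in> interior S"
proof -
  obtain r where r: "r > 0" "ball c r \<subseteq> S"
    using c open_interior open_contains_ball interior_subset by (metis subset_trans)
  let ?y = "(1 - s) *\<^sub>R x + s *\<^sub>R c"
  have "ball ?y (s * r) \<subseteq> S"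
  proof
    fix w assume w: "w \<in> ball ?y (s * r)"
    define v where "v = c + (1 / s) *\<^sub>R (w - ?y)"
    have "dist c v = norm (w - ?y) / s" using s by (simp add: v_def dist_norm)
    also have "\<dots> < r" using w s by (simp add: dist_norm norm_minus_commute field_simps)
    finally have "v \<in> S" using r by auto
    have "w = (1 - s) *\<^sub>R x + s *\<^sub>R v" using s by (simp add: v_def algebra_simps)
    then show "w \<in> S" using convexD[OF S x \<open>v \<in> S\<close>, of "1 - s" s] s by simp
  qed
  then show ?thesis using s r by (meson centre_in_ball interior_maximal mult_pos_pos open_ball subsetD)
qed

lemma short_step_in_ball:
  fixes x c :: "'a::real_normed_vector"
  assumes "d > 0"
  obtains s where "0 < s" "s \<le> 1" "(1 - s) *\<^sub>R x + s *\<^sub>R c \<in> ball x d"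
proof
  define s where "s = min 1 (d / (norm (c - x) + 1))"
  have n: "norm (c - x) + 1 > 0" by (smt (verit) norm_ge_zero)
  show "0 < s" "s \<le> 1" using assms n by (auto simp: s_def)
  have "dist x ((1 - s) *\<^sub>R x + s *\<^sub>R c) = s * norm (c - x)"
    using \<open>0 < s\<close> by (simp add: dist_norm algebra_simps norm_minus_commute flip: scaleR_diff_right)
  also have "\<dots> \<le> d / (norm (c - x) + 1) * norm (c - x)"
    by (intro mult_right_mono) (auto simp: s_def)
  also have "\<dots> < d" using assms n by (simp add: field_simps)
  finally show "(1 - s) *\<^sub>R x + s *\<^sub>R c \<in> ball x d" by simp
qed

lemma dom_meets_interior_Int:
  fixes D C K :: "'a::real_normed_vector set"
  assumes D: "convex (closure D)" and C: "convex C"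
    and x0: "x0 \<in> D" "x0 \<in> interior C"
    and x1: "x1 \<in> D" "x1 \<in> C" "x1 \<in> interior K"
  shows "D \<inter> interior (C \<inter> K) \<noteq> {}"
proof -
  obtain d where d: "d > 0" "ball x1 d \<subseteq> interior K"
    using x1(3) open_interior open_contains_ball by blast
  obtain s where s: "0 < s" "s \<le> 1" and y_ball: "(1 - s) *\<^sub>R x1 + s *\<^sub>R x0 \<in> ball x1 d"
    using short_step_in_ball[OF d(1)] by blast
  define y where "y = (1 - s) *\<^sub>R x1 + s *\<^sub>R x0"
  have "y \<in> interior C"
    unfolding y_def using convex_step_into_interior[OF C x0(2) x1(2) s] .
  moreover have "y \<in> interior K" using y_ball d(2) by (auto simp: y_def)
  moreover have "y \<in> closure D"
    unfolding y_def using convexD[OF D, of x1 x0 "1 - s" s] s x0(1) x1(1) closure_subset by auto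
  ultimately have "interior (C \<inter> K) \<inter> closure D \<noteq> {}" by (auto simp: interior_Int)
  then show ?thesis using open_Int_closure_eq_empty[of "interior (C \<inter> K)" D] by blast
qed

lemma generated_cone_Int_interior:
  fixes A C K :: "'a::real_normed_vector set"
  assumes A: "convex A" and C: "convex C"
    and x1: "x1 \<in> A" "x1 \<in> C" "x1 \<in> interior K"
  shows "generated_cone A (C \<inter> K) = generated_cone A C"
proof
  show "generated_cone A (C \<inter> K) \<subseteq> generated_cone A C"
    unfolding generated_cone_def by blast
  obtain d where d: "d > 0" "ball x1 d \<subseteq> interior K"
    using x1(3) open_interior open_contains_ball by blast
  show "generated_cone A C \<subseteq> generated_cone A (C \<inter> K)"
  proof
    fix z assume "z \<in> generated_cone A C"
    then obtain r a c where r: "r > 0" "a \<in> A" "c \<in> C" "z = r *\<^sub>R (a - c)"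
      by (auto simp: generated_cone_def)
    obtain s where s: "0 < s" "s \<le> 1" and c'_ball: "(1 - s) *\<^sub>R x1 + s *\<^sub>R c \<in> ball x1 d"
      using short_step_in_ball[OF d(1)] by blast
    define c' where "c' = (1 - s) *\<^sub>R x1 + s *\<^sub>R c"
    define a' where "a' = (1 - s) *\<^sub>R x1 + s *\<^sub>R a"
    have "c' \<in> C" using convexD[OF C x1(2) r(3)] s by (simp add: c'_def)
    moreover have "c' \<in> K" using c'_ball d(2) interior_subset unfolding c'_def by blast
    moreover have "a' \<in> A" using convexD[OF A x1(1) r(2)] s by (simp add: a'_def)
    moreover have "z = (r / s) *\<^sub>R (a' - c')"
      using r s by (simp add: a'_def c'_def flip: scaleR_diff_right)
    moreover have "r / s > 0" using r s by simp
    ultimately show "z \<in> generated_cone A (C \<inter> K)"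
      unfolding generated_cone_def by blast
  qed
qed

theorem lemma2p10:
  fixes T :: "'a::banach \<Rightarrow> ('a \<Rightarrow>\<^sub>L real) set"
    and i :: nat and C K :: "'a set"
  assumes "monotone_op T"
    and "i \<in> {0, 1}"
    and "C \<in> Cclass i T"
    and "K \<in> C0 (op_sum T (normal_cone C))"
    and "i = 0 \<Longrightarrow> convex (closure (dom_op T))"
  shows "C \<inter> K \<in> Cclass i T"
proof -
  let ?D = "dom_op T"
  from assms(4) have K: "closed K" "convex K" and "?D \<inter> C \<inter> interior K \<noteq> {}"
    by (auto simp: C0_def dom_op_sum_normal_cone)
  then obtain x1 where x1: "x1 \<in> ?D" "x1 \<in> C" "x1 \<in> interior K" by blast
  show ?thesis
  proof (cases "i = 0")
    case True
    with assms(3) have C: "closed C" "convex C" and "?D \<inter> interior C \<noteq> {}"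
      by (auto simp: Cclass_def C0_def)
    then obtain x0 where "x0 \<in> ?D" "x0 \<in> interior C" by blast
    then have "?D \<inter> interior (C \<inter> K) \<noteq> {}"
      using dom_meets_interior_Int[OF assms(5)[OF True] C(2) _ _ x1] by blast
    then show ?thesis using True C K by (simp add: Cclass_def C0_def closed_Int convex_Int)
  next
    case False
    with assms(3) have C: "C \<in> C1 T" by (simp add: Cclass_def)
    have "generated_cone (convex hull ?D) (C \<inter> K) = generated_cone (convex hull ?D) C"
      using C x1 by (intro generated_cone_Int_interior) (auto simp: C1_iff hull_inc)
    then show ?thesis using False C K by (simp add: Cclass_def C1_iff closed_Int convex_Int)
  qed
qed

end
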